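(* Let $\mathcal{A}\in\mathbb{C}^{I_{1\ldots N}\times I_{1\ldots N}}$ and let $\mathcal{N}\in\mathbb{C}^{I_{1\ldots N}\times I_{1\ldots N}}$ be a Hermitian positive definite tensor. Put $\tilde{\mathcal{A}}=\mathcal{N}^{1/2}*_N\mathcal{A}*_N\mathcal{N}^{-1/2}$. Then: (i) $\lambda\in\sigma(\mathcal{A})$ if and only if $\lambda\in\sigma(\tilde{\mathcal{A}})$; (ii) $\lambda\in\sigma(\mathcal{A}^{\dagger}_{\mathcal{N},\mathcal{N}})$ if and only if $\lambda\in\sigma(\tilde{\mathcal{A}}^{\dagger})$; (iii) if $\mathcal{A}$ is weighted normal (i.e. $\mathcal{A}^{\#}_{\mathcal{N}\mathcal{N}}*_N\mathcal{A}=\mathcal{A}*_N\mathcal{A}^{\#}_{\mathcal{N}\mathcal{N}}$) and $\lambda\neq0$, then $\lambda\in\sigma(\mathcal{A})$ if and only if $1/\lambda\in\sigma(\mathcal{A}^{\dagger}_{\mathcal{N},\mathcal{N}})$.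
   Context: Write $I_{1\ldots N}$ for $I_1\times\cdots\times I_N$. Einstein product: $(\mathcal{A}*_N\mathcal{B})_{i_1\ldots i_Mj_1\ldots j_L}=\sum_{k_1,\ldots,k_N}a_{i_1\ldots i_Mk_1\ldots k_N}b_{k_1\ldots k_Nj_1\ldots j_L}$ (also when $\mathcal{B}\in\mathbb{C}^{K_{1\ldots N}}$). $\mathcal{A}^H$ is the conjugate transpose. Identity tensor: entry 1 where the two index blocks coincide, 0 otherwise; inverses are with respect to $*_N$. $\mathcal{N}$ is Hermitian positive definite if $\mathcal{N}^H=\mathcal{N}$ and $\mathcal{X}^H*_N\mathcal{N}*_N\mathcal{X}>0$ for all nonzero $\mathcal{X}$; $\mathcal{N}^{1/2}$ is its unique Hermitian positive definite square root and $\mathcal{N}^{-1/2}=(\mathcal{N}^{1/2})^{-1}$. $\sigma(\mathcal{A})$ is the set of $\lambda\in\mathbb{C}$ such that $\mathcal{A}*_N\mathcal{X}=\lambda\mathcal{X}$ for some nonzero $\mathcal{X}\in\mathbb{C}^{I_{1\ldots N}}$. Weighted conjugate transpose: $\mathcal{A}^{\#}_{\mathcal{N}\mathcal{N}}=\mathcal{N}^{-1}*_N\mathcal{A}^H*_N\mathcal{N}$. Weighted Moore-Penrose inverse $\mathcal{A}^{\dagger}_{\mathcal{M},\mathcal{N}}$: the unique $\mathcal{X}$ with $\mathcal{A}*_N\mathcal{X}*_N\mathcal{A}=\mathcal{A}$, $\mathcal{X}*_N\mathcal{A}*_N\mathcal{X}=\mathcal{X}$, $(\mathcal{M}*_N\mathcal{A}*_N\mathcal{X})^H=\mathcal{M}*_N\mathcal{A}*_N\mathcal{X}$,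 $(\mathcal{N}*_N\mathcal{X}*_N\mathcal{A})^H=\mathcal{N}*_N\mathcal{X}*_N\mathcal{A}$; $\mathcal{A}^{\dagger}$ is the case of identity weights. *)

theory Defs
  imports "HOL-Analysis.Analysis"
begin

text \<open>Tensors in C^(I_1..N x I_1..N) are represented as functions on pairs of multi-indices
  (nat lists), for a dimension list d = [I_1,...,I_N]; well-formed tensors vanish outside
  the index set. Tensors in C^(I_1..N) are functions on multi-indices.\<close>

type_synonym tensor = "nat list \<Rightarrow> nat list \<Rightarrow> complex"
type_synonym vtensor = "nat list \<Rightarrow> complex"

definition idx :: "nat list \<Rightarrow> nat list set" where
  "idx d = {is. length is = length d \<and> (\<forall>k<length d. is ! k < d ! k)}"

definition tens :: "nat list \<Rightarrow> tensor \<Rightarrow> bool" where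
  "tens d A \<longleftrightarrow> (\<forall>i j. (i \<notin> idx d \<or> j \<notin> idx d) \<longrightarrow> A i j = 0)"

definition vtens :: "nat list \<Rightarrow> vtensor \<Rightarrow> bool" where
  "vtens d X \<longleftrightarrow> (\<forall>i. i \<notin> idx d \<longrightarrow> X i = 0)"

definition eprod :: "nat list \<Rightarrow> tensor \<Rightarrow> tensor \<Rightarrow> tensor" where
  "eprod d A B = (\<lambda>i j. if i \<in> idx d \<and> j \<in> idx d
      then (\<Sum>k\<in>idx d. A i k * B k j) else 0)"

definition eapp :: "nat list \<Rightarrow> tensor \<Rightarrow> vtensor \<Rightarrow> vtensor" where
  "eapp d A X = (\<lambda>i. if i \<in> idx d then (\<Sum>k\<in>idx d. A i k * X k) else 0)"

definition tident :: "nat list \<Rightarrow> tensor" where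
  "tident d = (\<lambda>i j. if i \<in> idx d \<and> j \<in> idx d \<and> i = j then 1 else 0)"

definition tH :: "tensor \<Rightarrow> tensor" where
  "tH A = (\<lambda>i j. cnj (A j i))"

definition hpd :: "nat list \<Rightarrow> tensor \<Rightarrow> bool" where
  "hpd d N \<longleftrightarrow> tens d N \<and> tH N = N \<and>
     (\<forall>X. vtens d X \<and> X \<noteq> (\<lambda>_. 0) \<longrightarrow>
        (let q = (\<Sum>i\<in>idx d. \<Sum>j\<in>idx d. cnj (X i) * N i j * X j) in q \<in> \<real> \<and> Re q > 0))"

definition tinv :: "nat list \<Rightarrow> tensor \<Rightarrow> tensor" where
  "tinv d A = (THE B. tens d B \<and> eprod d A B = tident d \<and> eprod d B A = tident d)"

definition tsqrt :: "nat list \<Rightarrow> tensor \<Rightarrow> tensor" where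
  "tsqrt d N = (THE S. hpd d S \<and> eprod d S S = N)"

definition wmp :: "nat list \<Rightarrow> tensor \<Rightarrow> tensor \<Rightarrow> tensor \<Rightarrow> tensor" where
  "wmp d M N A = (THE X. tens d X \<and>
     eprod d (eprod d A X) A = A \<and>
     eprod d (eprod d X A) X = X \<and>
     tH (eprod d M (eprod d A X)) = eprod d M (eprod d A X) \<and>
     tH (eprod d N (eprod d X A)) = eprod d N (eprod d X A))"

definition mp :: "nat list \<Rightarrow> tensor \<Rightarrow> tensor" where
  "mp d A = wmp d (tident d) (tident d) A"

definition wct :: "nat list \<Rightarrow> tensor \<Rightarrow> tensor \<Rightarrow> tensor" where
  "wct d N A = eprod d (tinv d N) (eprod d (tH A) N)"

definition tspec :: "nat list \<Rightarrow> tensor \<Rightarrow> complex set" where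
  "tspec d A = {c. \<exists>X. vtens d X \<and> X \<noteq> (\<lambda>_. 0) \<and> eapp d A X = (\<lambda>i. c * X i)}"

end

theory Submission
  imports Defs "Jordan_Normal_Form.Char_Poly"
begin

(* Tensors over the multi-index set idx d are square matrices indexed by a finite set and the
   Einstein product is matrix multiplication, so the theorem is finite-dimensional linear algebra
   and holds for complex matrices indexed by any finite set I.

   Write S = N^(1/2). Then A~ = S A S^-1 is similar to A, which gives (i). Conjugation
   X |-> S X S^-1 carries the Penrose equations of A with weights N, N onto the unweighted ones
   of A~, because (S Z S^-1)^H = S Z S^-1 iff (N Z)^H = N Z; hence the weighted inverse of A is
   S^-1 (A~)^dagger S, similar to (A~)^dagger, which gives (ii). Weighted normality of A is
   normality of A~, and a normal T commutes with Y = T^dagger: both Y Y^H and Y^H Y are the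
   Moore-Penrose inverse of T^H T = T T^H. If T Y T = T and T Y = Y T, then T x = l x with
   l ~= 0 forces Y x = x / l, which gives (iii).

   The definitions by THE need existence and uniqueness of N^(1/2), of inverses and of
   Moore-Penrose inverses; all three come from the spectral theorem for Hermitian matrices,
   proved by induction on I with Householder deflation. *)

section \<open>Matrices indexed by a finite set\<close>

type_synonym 'a cmat = "'a \<Rightarrow> 'a \<Rightarrow> complex"
type_synonym 'a cvec = "'a \<Rightarrow> complex"

definition mat_on :: "'a set \<Rightarrow> 'a cmat \<Rightarrow> bool" where
  "mat_on I A \<longleftrightarrow> (\<forall>i j. i \<notin> I \<or> j \<notin> I \<longrightarrow> A i j = 0)"

definition vec_on :: "'a set \<Rightarrow> 'a cvec \<Rightarrow> bool" where
  "vec_on I x \<longleftrightarrow> (\<forall>i. i \<notin> I \<longrightarrow> x i = 0)"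

definition mmult :: "'a set \<Rightarrow> 'a cmat \<Rightarrow> 'a cmat \<Rightarrow> 'a cmat" where
  "mmult I A B = (\<lambda>i j. if i \<in> I \<and> j \<in> I then \<Sum>k\<in>I. A i k * B k j else 0)"

definition mvmult :: "'a set \<Rightarrow> 'a cmat \<Rightarrow> 'a cvec \<Rightarrow> 'a cvec" where
  "mvmult I A x = (\<lambda>i. if i \<in> I then \<Sum>k\<in>I. A i k * x k else 0)"

definition mone :: "'a set \<Rightarrow> 'a cmat" where
  "mone I = (\<lambda>i j. if i \<in> I \<and> j \<in> I \<and> i = j then 1 else 0)"

definition dmat :: "'a set \<Rightarrow> 'a cvec \<Rightarrow> 'a cmat" where
  "dmat I D = (\<lambda>i j. if i \<in> I \<and> j \<in> I \<and> i = j then D i else 0)"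

definition ctrans :: "'a cmat \<Rightarrow> 'a cmat" (\<open>_\<^sup>H\<close> [1000] 1000) where
  "A\<^sup>H = (\<lambda>i j. cnj (A j i))"

lemma sum_eq_single:
  assumes "finite I" "i \<in> I" "\<And>k. k \<in> I \<Longrightarrow> k \<noteq> i \<Longrightarrow> f k = 0"
  shows "sum f I = f i"
  using assms by (simp add: sum.remove sum.neutral)

lemma cnj_mult_self: "cnj z * z = of_real ((cmod z)\<^sup>2)"
  by (metis complex_norm_square mult.commute)

lemma cmat_eq_if_diff_zero: "A - B = (\<lambda>_ _. 0) \<Longrightarrow> A = (B :: 'a cmat)"
  by (simp add: fun_eq_iff)

lemma mat_on_mmult [simp]: "mat_on I (mmult I A B)"
  by (simp add: mat_on_def mmult_def)

lemma vec_on_mvmult [simp]: "vec_on I (mvmult I A x)"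
  by (simp add: vec_on_def mvmult_def)

lemma mat_on_mone [simp]: "mat_on I (mone I)"
  by (simp add: mat_on_def mone_def)

lemma mat_on_dmat [simp]: "mat_on I (dmat I D)"
  by (simp add: mat_on_def dmat_def)

lemma mat_on_ctrans [simp]: "mat_on I A \<Longrightarrow> mat_on I (A\<^sup>H)"
  by (auto simp: mat_on_def ctrans_def)

lemma mat_on_diff [simp]: "mat_on I A \<Longrightarrow> mat_on I B \<Longrightarrow> mat_on I (A - B)"
  by (simp add: mat_on_def)

lemma ctrans_ctrans [simp]: "A\<^sup>H\<^sup>H = A"
  by (simp add: ctrans_def)

lemma ctrans_mone [simp]: "(mone I)\<^sup>H = mone I"
  by (auto simp: ctrans_def mone_def fun_eq_iff)

lemma ctrans_dmat: "(dmat I D)\<^sup>H = dmat I (\<lambda>k. cnj (D k))"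
  by (auto simp: ctrans_def dmat_def fun_eq_iff)

lemma ctrans_diff: "(A - B)\<^sup>H = A\<^sup>H - B\<^sup>H"
  by (simp add: ctrans_def fun_eq_iff)

lemma ctrans_mmult: "(mmult I A B)\<^sup>H = mmult I (B\<^sup>H) (A\<^sup>H)"
  by (auto simp: ctrans_def mmult_def fun_eq_iff mult.commute)

lemma mmult_diff_left: "mmult I (A - B) C = mmult I A C - mmult I B C"
  by (auto simp: fun_eq_iff mmult_def sum_subtractf left_diff_distrib)

lemma mmult_diff_right: "mmult I C (A - B) = mmult I C A - mmult I C B"
  by (auto simp: fun_eq_iff mmult_def sum_subtractf right_diff_distrib)

lemma mvmult_scale: "mvmult I A (\<lambda>i. c * x i) = (\<lambda>i. c * mvmult I A x i)"
  by (auto simp: mvmult_def fun_eq_iff sum_distrib_left mult.left_commute)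

lemma mvmult_zero [simp]: "mvmult I A (\<lambda>_. 0) = (\<lambda>_. 0)"
  by (simp add: mvmult_def fun_eq_iff)

lemma dmat_cong: "(\<And>k. k \<in> I \<Longrightarrow> D k = E k) \<Longrightarrow> dmat I D = dmat I E"
  by (auto simp: dmat_def fun_eq_iff)

lemma dmat_one: "dmat I (\<lambda>_. 1) = mone I"
  by (simp add: dmat_def mone_def)

lemma complex_mat_eigenvector_exists:
  fixes M :: "complex mat"
  assumes M: "M \<in> carrier_mat n n" and "0 < n"
  obtains z v where "eigenvector M v z"
proof -
  have "\<not> constant (poly (char_poly M))"
    using degree_monic_char_poly[OF M] \<open>0 < n\<close> by (simp add: constant_degree)
  then obtain z where "poly (char_poly M) z = 0"
    using fundamental_theorem_of_algebra by blast
  then show ?thesis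
    using eigenvalue_root_char_poly[OF M] that unfolding eigenvalue_def by blast
qed

locale finite_index =
  fixes I :: "'a set"
  assumes finite_I: "finite I"
begin

abbreviation mprod :: "'a cmat \<Rightarrow> 'a cmat \<Rightarrow> 'a cmat" (infixl \<open>\<star>\<close> 70) where
  "A \<star> B \<equiv> mmult I A B"

lemma mmult_assoc: "A \<star> B \<star> C = A \<star> (B \<star> C)"
proof (intro ext)
  fix i j
  show "(A \<star> B \<star> C) i j = (A \<star> (B \<star> C)) i j"
  proof (cases "i \<in> I \<and> j \<in> I")
    case True
    then have "(A \<star> B \<star> C) i j = (\<Sum>k\<in>I. \<Sum>l\<in>I. A i l * B l k * C k j)"
      by (simp add: mmult_def sum_distrib_right)
    also have "\<dots> = (\<Sum>l\<in>I. \<Sum>k\<in>I. A i l * B l k * C k j)"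
      by (rule sum.swap)
    also have "\<dots> = (A \<star> (B \<star> C)) i j"
      using True by (simp add: mmult_def sum_distrib_left mult.assoc)
    finally show ?thesis .
  qed (auto simp: mmult_def)
qed

lemma mmult_mone_left [simp]: "mat_on I A \<Longrightarrow> mone I \<star> A = A"
  using finite_I by (auto simp: fun_eq_iff mmult_def mone_def mat_on_def
      sum_eq_single[where i = i for i])

lemma mmult_mone_right [simp]: "mat_on I A \<Longrightarrow> A \<star> mone I = A"
  using finite_I by (auto simp: fun_eq_iff mmult_def mone_def mat_on_def
      sum_eq_single[where i = j for j])

lemma mmult_cancel: "A \<star> B = mone I \<Longrightarrow> mat_on I X \<Longrightarrow> A \<star> (B \<star> X) = X"
  by (simp flip: mmult_assoc)

lemma mvmult_mmult: "mvmult I (A \<star> B) x = mvmult I A (mvmult I B x)"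
proof
  fix i
  show "mvmult I (A \<star> B) x i = mvmult I A (mvmult I B x) i"
  proof (cases "i \<in> I")
    case True
    then have "mvmult I (A \<star> B) x i = (\<Sum>k\<in>I. \<Sum>l\<in>I. A i l * B l k * x k)"
      by (simp add: mmult_def mvmult_def sum_distrib_right)
    also have "\<dots> = (\<Sum>l\<in>I. \<Sum>k\<in>I. A i l * B l k * x k)"
      by (rule sum.swap)
    also have "\<dots> = mvmult I A (mvmult I B x) i"
      using True by (simp add: mvmult_def sum_distrib_left mult.assoc)
    finally show ?thesis .
  qed (simp add: mvmult_def)
qed

lemma mvmult_mone [simp]: "vec_on I x \<Longrightarrow> mvmult I (mone I) x = x"
  using finite_I by (auto simp: fun_eq_iff mvmult_def mone_def vec_on_def
      sum_eq_single[where i = i for i])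

lemma dmat_mult: "dmat I D \<star> dmat I E = dmat I (\<lambda>k. D k * E k)"
  using finite_I by (auto simp: fun_eq_iff mmult_def dmat_def sum_eq_single[where i = i for i])

lemma inverse_unique:
  assumes "mat_on I B" "mat_on I C" "B \<star> A = mone I" "A \<star> C = mone I"
  shows "B = C"
proof -
  have "B = B \<star> (A \<star> C)"
    using assms(1,4) by simp
  also have "\<dots> = C"
    using assms(2,3) by (simp flip: mmult_assoc)
  finally show ?thesis .
qed

end

section \<open>The spectral theorem for Hermitian matrices\<close>

definition unitary_on :: "'a set \<Rightarrow> 'a cmat \<Rightarrow> bool" where
  "unitary_on I U \<longleftrightarrow> mat_on I U \<and> mmult I (U\<^sup>H) U = mone I \<and> mmult I U (U\<^sup>H) = mone I"

definition unitarily_diagonalizable :: "'a set \<Rightarrow> 'a cmat \<Rightarrow> bool" where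
  "unitarily_diagonalizable I H \<longleftrightarrow>
     (\<exists>U D. unitary_on I U \<and> H = mmult I U (mmult I (dmat I D) (U\<^sup>H)))"

context finite_index
begin

lemma unitary_mult:
  assumes "unitary_on I U" "unitary_on I V"
  shows "unitary_on I (U \<star> V)"
  using assms by (simp add: unitary_on_def ctrans_mmult mmult_assoc mmult_cancel)

lemma eigenvector_exists:
  assumes "I \<noteq> {}"
  obtains l x where "vec_on I x" "x \<noteq> (\<lambda>_. 0)" "mvmult I H x = (\<lambda>i. l * x i)"
proof -
  define n where "n = card I"
  have "n > 0"
    using finite_I assms by (simp add: n_def card_gt_0_iff)
  obtain h where h: "bij_betw h {0..<n} I"
    using ex_bij_betw_nat_finite[OF finite_I] n_def by blast
  define g where "g = inv_into {0..<n} h"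
  have hg: "h (g a) = a" "g a < n" if "a \<in> I" for a
    using that h bij_betw_inv_into_right[OF h] bij_betwE[OF bij_betw_inv_into[OF h]]
    by (auto simp: g_def)
  have gh: "g (h j) = j" "h j \<in> I" if "j < n" for j
    using that h by (auto simp: g_def bij_betw_inv_into_left bij_betwE)
  define M where "M = Matrix.mat n n (\<lambda>(i, j). H (h i) (h j))"
  have M: "M \<in> carrier_mat n n"
    by (simp add: M_def)
  obtain z v where "eigenvector M v z"
    using complex_mat_eigenvector_exists[OF M \<open>n > 0\<close>] .
  then have v: "v \<in> carrier_vec n" "v \<noteq> 0\<^sub>v n" "M *\<^sub>v v = z \<cdot>\<^sub>v v"
    using M unfolding eigenvector_def by auto
  define x where "x = (\<lambda>a. if a \<in> I then vec_index v (g a) else 0)"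
  have xh: "x (h j) = vec_index v j" if "j < n" for j
    using gh[OF that] by (simp add: x_def)
  have "vec_on I x"
    by (simp add: vec_on_def x_def)
  moreover have "x \<noteq> (\<lambda>_. 0)"
  proof
    assume "x = (\<lambda>_. 0)"
    then have "v = 0\<^sub>v n"
      using v(1) xh by (intro eq_vecI) auto
    with v(2) show False ..
  qed
  moreover have "mvmult I H x = (\<lambda>a. z * x a)"
  proof
    fix a
    show "mvmult I H x a = z * x a"
    proof (cases "a \<in> I")
      case True
      have "mvmult I H x a = (\<Sum>j\<in>{0..<n}. H a (h j) * x (h j))"
        using True sum.reindex_bij_betw[OF h, of "\<lambda>b. H a b * x b"] by (simp add: mvmult_def)
      also have "\<dots> = (\<Sum>j\<in>{0..<n}. M $$ (g a, j) * vec_index v j)"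
        using xh hg[OF True] by (auto simp: M_def intro!: sum.cong)
      also have "\<dots> = vec_index (M *\<^sub>v v) (g a)"
        using hg[OF True] M v(1) by (simp add: scalar_prod_def)
      also have "\<dots> = z * x a"
        using v hg[OF True] True by (simp add: x_def)
      finally show ?thesis .
    qed (simp add: mvmult_def x_def)
  qed
  ultimately show ?thesis
    by (rule that)
qed

lemma normalized_eigenvector:
  assumes "i0 \<in> I"
  obtains l v where "vec_on I v" "(\<Sum>k\<in>I. cnj (v k) * v k) = 1" "cnj (v i0) = v i0"
    "Re (v i0) \<le> 0" "mvmult I H v = (\<lambda>i. l * v i)"
proof -
  obtain l x where x: "vec_on I x" "x \<noteq> (\<lambda>_. 0)" "mvmult I H x = (\<lambda>i. l * x i)"
    using eigenvector_exists assms by blast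
  from x(2) obtain j where "x j \<noteq> 0"
    by (auto simp: fun_eq_iff)
  with x(1) have j: "j \<in> I" "x j \<noteq> 0"
    by (auto simp: vec_on_def)
  define r where "r = (\<Sum>k\<in>I. (cmod (x k))\<^sup>2)"
  have r: "r > 0"
    using finite_I j by (auto simp: r_def intro!: sum_pos2[of _ j])
  define u where "u = (if x i0 = 0 then 1 else cnj (x i0) / cmod (x i0))"
  have u1: "cmod u = 1"
    by (simp add: u_def norm_divide)
  have u2: "u * x i0 = cmod (x i0)"
  proof (cases "x i0 = 0")
    case False
    have "cnj (x i0) * x i0 = of_real (cmod (x i0)) * of_real (cmod (x i0))"
      by (metis complex_norm_square mult.commute of_real_mult power2_eq_square)
    with False show ?thesis
      by (simp add: u_def)
  qed (simp add: u_def)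
  define v where "v = (\<lambda>i. - u / sqrt r * x i)"
  have "vec_on I v"
    using x(1) by (simp add: vec_on_def v_def)
  moreover have "(\<Sum>k\<in>I. cnj (v k) * v k) = 1"
  proof -
    have "(\<Sum>k\<in>I. cnj (v k) * v k) = of_real (\<Sum>k\<in>I. (cmod (v k))\<^sup>2)"
      by (simp add: cnj_mult_self)
    also have "(\<Sum>k\<in>I. (cmod (v k))\<^sup>2) = (\<Sum>k\<in>I. (cmod (x k))\<^sup>2) / r"
      using u1 r by (simp add: v_def norm_mult norm_divide power_mult_distrib power_divide
          sum_divide_distrib)
    finally show ?thesis
      using r by (simp add: r_def)
  qed
  moreover have "v i0 = - (cmod (x i0) / sqrt r)"
    using u2 by (simp add: v_def)
  then have "cnj (v i0) = v i0" "Re (v i0) \<le> 0"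
    using r by simp_all
  moreover have "mvmult I H v = (\<lambda>i. l * v i)"
    unfolding v_def mvmult_scale x(3) by (simp add: mult.left_commute)
  ultimately show ?thesis
    using that by blast
qed

end

text \<open>For \<open>w = 0\<close> on \<open>I\<close> the division by zero yields the identity, so the involution
  property below needs no hypothesis.\<close>

definition householder :: "'a set \<Rightarrow> 'a cvec \<Rightarrow> 'a cmat" where
  "householder I w = (\<lambda>i j. if i \<in> I \<and> j \<in> I
     then (if i = j then 1 else 0) - 2 / (\<Sum>k\<in>I. cnj (w k) * w k) * w i * cnj (w j) else 0)"

lemma mat_on_householder [simp]: "mat_on I (householder I w)"
  by (simp add: mat_on_def householder_def)

lemma ctrans_householder [simp]: "(householder I w)\<^sup>H = householder I w"
  by (auto simp: ctrans_def householder_def fun_eq_iff mult.commute)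

context finite_index
begin

lemma householder_involution: "householder I w \<star> householder I w = mone I"
proof (intro ext)
  fix i j
  define q where "q = (\<Sum>k\<in>I. cnj (w k) * w k)"
  define c where "c = 2 / q"
  let ?d = "\<lambda>i j. if i = j then 1 else (0::complex)"
  have cq: "c * c * q = 2 * c"
    by (cases "q = 0") (simp_all add: c_def field_simps)
  show "(householder I w \<star> householder I w) i j = mone I i j"
  proof (cases "i \<in> I \<and> j \<in> I")
    case True
    have "(householder I w \<star> householder I w) i j
        = (\<Sum>k\<in>I. ?d i k * ?d k j - ?d i k * (c * w k * cnj (w j))
             - c * w i * cnj (w k) * ?d k j + c * c * w i * cnj (w j) * (cnj (w k) * w k))"
      using True
      by (auto simp: mmult_def householder_def c_def q_def algebra_simps intro!: sum.cong)
    also have "\<dots> = ?d i j - c * w i * cnj (w j) - c * w i * cnj (w j)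
        + c * c * w i * cnj (w j) * q"
      using True finite_I
      by (simp add: sum.distrib sum_subtractf sum_distrib_left q_def sum_eq_single[where i = i]
          sum_eq_single[where i = j])
    also have "\<dots> = ?d i j + (c * c * q - 2 * c) * (w i * cnj (w j))"
      by (simp add: algebra_simps)
    also have "\<dots> = mone I i j"
      using True by (simp add: cq mone_def)
    finally show ?thesis .
  qed (auto simp: mmult_def mone_def)
qed

lemma householder_reflection:
  assumes i0: "i0 \<in> I" and v: "vec_on I v" "(\<Sum>k\<in>I. cnj (v k) * v k) = 1"
    "cnj (v i0) = v i0" "Re (v i0) \<le> 0"
  defines "e \<equiv> \<lambda>i. if i = i0 then 1 else 0"
  shows "mvmult I (householder I (\<lambda>i. e i - v i)) e = v"
proof
  fix i
  define w where "w = (\<lambda>i. e i - v i)"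
  \<comment> \<open>The reflection along \<open>w = e - v\<close> swaps \<open>e\<close> and \<open>v\<close> because both are unit vectors
    and \<open>\<langle>e, v\<rangle>\<close> is real.\<close>
  have q: "(\<Sum>k\<in>I. cnj (w k) * w k) = 2 - 2 * v i0"
  proof -
    have "(\<Sum>k\<in>I. cnj (w k) * w k)
        = (\<Sum>k\<in>I. cnj (e k) * e k - cnj (e k) * v k - cnj (v k) * e k + cnj (v k) * v k)"
      by (simp add: w_def algebra_simps)
    also have "\<dots> = 1 - v i0 - cnj (v i0) + 1"
      using i0 finite_I v(2)
      by (simp add: sum.distrib sum_subtractf e_def sum_eq_single[where i = i0])
    finally show ?thesis
      using v(3) by simp
  qed
  have "Re (2 - 2 * v i0) \<ge> 2"
    using v(4) by simp
  then have q0: "2 - 2 * v i0 \<noteq> 0"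
    by auto
  show "mvmult I (householder I w) e i = v i"
  proof (cases "i \<in> I")
    case True
    have "mvmult I (householder I w) e i = householder I w i i0"
      using True i0 finite_I
      by (simp add: mvmult_def e_def if_distrib[of "\<lambda>t. _ * t"] cong: if_cong)
    also have "\<dots> = e i - w i"
    proof -
      have "cnj (w i0) = 1 - v i0"
        using v(3) by (simp add: w_def e_def)
      then have "householder I w i i0 = e i - 2 / (2 - 2 * v i0) * w i * (1 - v i0)"
        unfolding householder_def q using True i0 by (simp add: e_def)
      also have "\<dots> = e i - w i"
        using q0 by (simp add: field_simps)
      finally show ?thesis .
    qed
    finally show ?thesis
      by (simp add: w_def)
  qed (use v(1) in \<open>simp add: mvmult_def vec_on_def\<close>)
qed

lemma unitary_deflation:
  assumes i0: "i0 \<in> I"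
  obtains W where "unitary_on I W" "\<And>a. a \<in> I \<Longrightarrow> a \<noteq> i0 \<Longrightarrow> (W\<^sup>H \<star> H \<star> W) a i0 = 0"
proof -
  obtain l v where v: "vec_on I v" "(\<Sum>k\<in>I. cnj (v k) * v k) = 1" "cnj (v i0) = v i0"
    "Re (v i0) \<le> 0" and eig: "mvmult I H v = (\<lambda>i. l * v i)"
    using normalized_eigenvector[OF i0] by blast
  define e where "e = (\<lambda>i. if i = i0 then 1 else (0::complex))"
  \<comment> \<open>\<open>W\<close> sends \<open>e\<close> to the eigenvector \<open>v\<close>, so \<open>e\<close> is an eigenvector of \<open>W\<^sup>H H W\<close>.\<close>
  define W where "W = householder I (\<lambda>i. e i - v i)"
  have WH: "W\<^sup>H = W" and WW: "W \<star> W = mone I"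
    by (simp_all add: W_def householder_involution)
  have We: "mvmult I W e = v"
    unfolding W_def e_def using householder_reflection[OF i0 v] .
  have Wv: "mvmult I W v = e"
    using i0 by (simp flip: We mvmult_mmult add: WW vec_on_def e_def)
  define M where "M = W\<^sup>H \<star> H \<star> W"
  have "mvmult I M e = (\<lambda>i. l * e i)"
    by (simp add: M_def WH mvmult_mmult We eig mvmult_scale Wv)
  moreover have "mvmult I M e a = M a i0" if "a \<in> I" for a
    using that i0 finite_I by (simp add: mvmult_def e_def sum_eq_single[where i = i0])
  ultimately have "M a i0 = 0" if "a \<in> I" "a \<noteq> i0" for a
    using that by (metis e_def mult_zero_right)
  then show ?thesis
    using that[of W] WH WW by (simp add: unitary_on_def W_def M_def)
qed

lemma unitarily_diagonalizable_conj:
  assumes W: "unitary_on I W" and H: "mat_on I H"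
    and diag: "unitarily_diagonalizable I (W\<^sup>H \<star> H \<star> W)"
  shows "unitarily_diagonalizable I H"
proof -
  obtain U D where U: "unitary_on I U" and HD: "W\<^sup>H \<star> H \<star> W = U \<star> (dmat I D \<star> U\<^sup>H)"
    using diag unfolding unitarily_diagonalizable_def by blast
  have "H = W \<star> (W\<^sup>H \<star> H \<star> W) \<star> W\<^sup>H"
    using W H by (simp add: unitary_on_def mmult_assoc mmult_cancel)
  also have "\<dots> = W \<star> (U \<star> (dmat I D \<star> U\<^sup>H)) \<star> W\<^sup>H"
    by (simp only: HD)
  also have "\<dots> = (W \<star> U) \<star> (dmat I D \<star> (W \<star> U)\<^sup>H)"
    by (simp add: ctrans_mmult mmult_assoc)
  finally show ?thesis
    using unitary_mult[OF W U] unfolding unitarily_diagonalizable_def by blast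
qed

end

definition border :: "'a \<Rightarrow> complex \<Rightarrow> 'a cmat \<Rightarrow> 'a cmat" where
  "border i0 x X = (\<lambda>a b. if a = i0 \<and> b = i0 then x else if a = i0 \<or> b = i0 then 0 else X a b)"

lemma mat_on_border: "mat_on F X \<Longrightarrow> mat_on (insert i0 F) (border i0 x X)"
  by (simp add: mat_on_def border_def)

lemma ctrans_border: "(border i0 x X)\<^sup>H = border i0 (cnj x) (X\<^sup>H)"
  by (auto simp: fun_eq_iff ctrans_def border_def)

lemma mone_border: "mone (insert i0 F) = border i0 1 (mone F)"
  by (auto simp: fun_eq_iff mone_def border_def)

lemma dmat_border: "dmat (insert i0 F) D = border i0 (D i0) (dmat F D)"
  by (auto simp: fun_eq_iff dmat_def border_def)

lemma mmult_border:
  assumes "finite F" "i0 \<notin> F"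
  shows "mmult (insert i0 F) (border i0 x X) (border i0 y Y) = border i0 (x * y) (mmult F X Y)"
proof (intro ext)
  fix a b
  have "k \<noteq> i0" if "k \<in> F" for k
    using that assms(2) by blast
  then have inner: "(\<Sum>k\<in>F. border i0 x X a k * border i0 y Y k b)
      = (if a = i0 \<or> b = i0 then 0 else \<Sum>k\<in>F. X a k * Y k b)"
    by (simp add: border_def cong: sum.cong)
  show "mmult (insert i0 F) (border i0 x X) (border i0 y Y) a b
      = border i0 (x * y) (mmult F X Y) a b"
    using assms by (simp add: mmult_def inner) (simp add: border_def)
qed

lemma unitarily_diagonalizable_border:
  assumes F: "finite F" "i0 \<notin> F" and X: "unitarily_diagonalizable F X"
  shows "unitarily_diagonalizable (insert i0 F) (border i0 x X)"
proof -
  obtain U D where U: "unitary_on F U" and XD: "X = mmult F U (mmult F (dmat F D) (U\<^sup>H))"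
    using X unfolding unitarily_diagonalizable_def by blast
  have "dmat F (D(i0 := x)) = dmat F D"
    using F(2) by (intro dmat_cong) auto
  then have "border i0 x X = mmult (insert i0 F) (border i0 1 U)
      (mmult (insert i0 F) (dmat (insert i0 F) (D(i0 := x))) ((border i0 1 U)\<^sup>H))"
    by (simp add: XD dmat_border ctrans_border mmult_border F)
  moreover have "unitary_on (insert i0 F) (border i0 1 U)"
    using U by (simp add: unitary_on_def mat_on_border ctrans_border mmult_border mone_border F)
  ultimately show ?thesis
    unfolding unitarily_diagonalizable_def by blast
qed

theorem hermitian_unitarily_diagonalizable:
  assumes "finite I" "mat_on I H" "H\<^sup>H = H"
  shows "unitarily_diagonalizable I H"
  using assms
proof (induction I arbitrary: H rule: finite_induct)
  case empty
  then have "H = mmult {} U (mmult {} (dmat {} D) (U\<^sup>H))" "unitary_on {} (\<lambda>_ _. 0)" for U D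
    by (auto simp: fun_eq_iff mat_on_def mmult_def unitary_on_def mone_def)
  then show ?case
    unfolding unitarily_diagonalizable_def by blast
next
  case (insert i0 F)
  let ?J = "insert i0 F"
  interpret finite_index ?J
    using insert.hyps(1) by unfold_locales simp
  obtain W where W: "unitary_on ?J W"
    and col: "\<And>a. a \<in> ?J \<Longrightarrow> a \<noteq> i0 \<Longrightarrow> mmult ?J (mmult ?J (W\<^sup>H) H) W a i0 = 0"
    using unitary_deflation[of i0 H] by blast
  define H1 where "H1 = mmult ?J (mmult ?J (W\<^sup>H) H) W"
  have H1: "mat_on ?J H1" "H1\<^sup>H = H1"
    using insert.prems by (simp_all add: H1_def ctrans_mmult mmult_assoc)
  have herm: "cnj (H1 b a) = H1 a b" for a b
    using fun_cong[OF fun_cong[OF H1(2)], of a b] by (simp add: ctrans_def)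
  have row: "H1 i0 a = 0" if "a \<in> F" for a
  proof -
    have "a \<noteq> i0"
      using that insert.hyps(2) by auto
    then have "H1 a i0 = 0"
      using col[of a] that by (simp add: H1_def)
    then show ?thesis
      using herm[of a i0] by simp
  qed
  \<comment> \<open>\<open>H1\<close> is block diagonal, with the block \<open>H2\<close> on \<open>F\<close> diagonalizable by induction.\<close>
  define H2 where "H2 = (\<lambda>a b. if a \<in> F \<and> b \<in> F then H1 a b else 0)"
  have "H1 = border i0 (H1 i0 i0) H2"
    using H1(1) col row insert.hyps(2)
    by (auto simp: fun_eq_iff border_def H2_def mat_on_def H1_def)
  moreover have "unitarily_diagonalizable F H2"
  proof (rule insert.IH)
    show "mat_on F H2"
      by (simp add: mat_on_def H2_def)
    show "H2\<^sup>H = H2"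
      using herm by (simp add: H2_def ctrans_def fun_eq_iff)
  qed
  ultimately have "unitarily_diagonalizable ?J H1"
    using unitarily_diagonalizable_border insert.hyps by metis
  then show ?case
    using unitarily_diagonalizable_conj[OF W insert.prems(1)] by (simp add: H1_def)
qed

section \<open>Positive definite matrices\<close>

definition qform :: "'a set \<Rightarrow> 'a cmat \<Rightarrow> 'a cvec \<Rightarrow> complex" where
  "qform I N x = (\<Sum>i\<in>I. \<Sum>j\<in>I. cnj (x i) * N i j * x j)"

definition pos_def_on :: "'a set \<Rightarrow> 'a cmat \<Rightarrow> bool" where
  "pos_def_on I N \<longleftrightarrow> mat_on I N \<and> N\<^sup>H = N \<and>
     (\<forall>x. vec_on I x \<and> x \<noteq> (\<lambda>_. 0) \<longrightarrow> qform I N x \<in> \<real> \<and> 0 < Re (qform I N x))"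

context finite_index
begin

lemma unitary_conj_dmat:
  assumes "unitary_on I U"
  shows "U\<^sup>H \<star> (U \<star> (dmat I D \<star> U\<^sup>H)) \<star> U = dmat I D"
  using assms by (simp add: unitary_on_def mmult_assoc mmult_cancel)

lemma unitary_diag_mult:
  assumes "unitary_on I U"
  shows "U \<star> (dmat I D \<star> U\<^sup>H) \<star> (U \<star> (dmat I E \<star> U\<^sup>H)) = U \<star> (dmat I (\<lambda>k. D k * E k) \<star> U\<^sup>H)"
  using assms by (simp add: unitary_on_def mmult_assoc mmult_cancel flip: dmat_mult)

lemma hermitian_diagonalization:
  assumes H: "mat_on I H" "H\<^sup>H = H"
  obtains U D where "unitary_on I U" "H = U \<star> (dmat I D \<star> U\<^sup>H)" "\<And>k. k \<in> I \<Longrightarrow> D k \<in> \<real>"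
proof -
  obtain U D where U: "unitary_on I U" and HD: "H = U \<star> (dmat I D \<star> U\<^sup>H)"
    using hermitian_unitarily_diagonalizable[OF finite_I H]
    unfolding unitarily_diagonalizable_def by blast
  have "dmat I (\<lambda>k. cnj (D k)) = dmat I D"
    using H(2) unitary_conj_dmat[OF U, of D]
    by (metis HD ctrans_ctrans ctrans_mmult ctrans_dmat mmult_assoc)
  then have "cnj (D k) = D k" if "k \<in> I" for k
  proof -
    have "dmat I (\<lambda>k. cnj (D k)) k k = dmat I D k k"
      by (simp only: \<open>dmat I (\<lambda>k. cnj (D k)) = dmat I D\<close>)
    then show ?thesis
      using that by (simp add: dmat_def)
  qed
  then show ?thesis
    using that U HD Reals_cnj_iff by blast
qed

lemma dmat_mmult_entry:
  assumes "k \<in> I" "j \<in> I"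
  shows "(dmat I D \<star> A) k j = D k * A k j" "(A \<star> dmat I D) j k = A j k * D k"
  using assms finite_I by (simp_all add: mmult_def dmat_def sum_eq_single[where i = k])

lemma qform_column:
  assumes "k \<in> I"
  shows "qform I N (\<lambda>i. U i k) = (U\<^sup>H \<star> N \<star> U) k k"
  unfolding mmult_assoc using assms
  by (simp add: qform_def mmult_def ctrans_def sum_distrib_left mult.assoc)

lemma unitary_column:
  assumes "unitary_on I U" "k \<in> I"
  shows "vec_on I (\<lambda>i. U i k)" "(\<lambda>i. U i k) \<noteq> (\<lambda>_. 0)"
proof -
  show "vec_on I (\<lambda>i. U i k)"
    using assms by (simp add: unitary_on_def mat_on_def vec_on_def)
  have "(U\<^sup>H \<star> U) k k = 1"
    using assms by (simp add: unitary_on_def mone_def)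
  show "(\<lambda>i. U i k) \<noteq> (\<lambda>_. 0)"
  proof
    assume col: "(\<lambda>i. U i k) = (\<lambda>_. 0)"
    have "U i k = 0" for i
      using fun_cong[OF col, of i] by simp
    then have "(U\<^sup>H \<star> U) k k = 0"
      by (simp add: mmult_def ctrans_def)
    with \<open>(U\<^sup>H \<star> U) k k = 1\<close> show False
      by simp
  qed
qed

lemma pos_def_conj_diag:
  assumes "pos_def_on I N" "unitary_on I U" "k \<in> I"
  shows "(U\<^sup>H \<star> N \<star> U) k k \<in> \<real>" "0 < Re ((U\<^sup>H \<star> N \<star> U) k k)"
  using assms unitary_column[OF assms(2,3)]
  by (simp_all add: pos_def_on_def flip: qform_column)

lemma pos_def_diagonalization:
  assumes N: "pos_def_on I N"
  obtains U D where "unitary_on I U" "N = U \<star> (dmat I D \<star> U\<^sup>H)"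
    "\<And>k. k \<in> I \<Longrightarrow> D k \<in> \<real> \<and> 0 < Re (D k)"
proof -
  obtain U D where U: "unitary_on I U" and ND: "N = U \<star> (dmat I D \<star> U\<^sup>H)"
    using N hermitian_diagonalization unfolding pos_def_on_def by metis
  have "U\<^sup>H \<star> N \<star> U = dmat I D"
    using ND unitary_conj_dmat[OF U] by simp
  then have "D k \<in> \<real> \<and> 0 < Re (D k)" if "k \<in> I" for k
    using pos_def_conj_diag[OF N U that] that by (simp add: dmat_def)
  with U ND that show ?thesis
    by blast
qed

lemma qform_unitary_diag:
  "qform I (U \<star> (dmat I D \<star> U\<^sup>H)) x
    = (\<Sum>k\<in>I. D k * of_real ((cmod (mvmult I (U\<^sup>H) x k))\<^sup>2))"
proof -
  define y where "y = mvmult I (U\<^sup>H) x"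
  have y: "y k = (\<Sum>j\<in>I. cnj (U j k) * x j)" if "k \<in> I" for k
    using that by (simp add: y_def mvmult_def ctrans_def)
  have entry: "(U \<star> (dmat I D \<star> U\<^sup>H)) i j = (\<Sum>k\<in>I. D k * U i k * cnj (U j k))"
    if "i \<in> I" "j \<in> I" for i j
    using that by (simp add: mmult_def[of I U] dmat_mmult_entry ctrans_def mult_ac cong: sum.cong)
  have "qform I (U \<star> (dmat I D \<star> U\<^sup>H)) x
      = (\<Sum>i\<in>I. \<Sum>j\<in>I. \<Sum>k\<in>I. D k * (cnj (x i) * U i k) * (cnj (U j k) * x j))"
    unfolding qform_def
    by (intro sum.cong refl) (simp add: entry sum_distrib_left sum_distrib_right mult_ac)
  also have "\<dots> = (\<Sum>i\<in>I. \<Sum>k\<in>I. \<Sum>j\<in>I. D k * (cnj (x i) * U i k) * (cnj (U j k) * x j))"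
    by (intro sum.cong refl sum.swap)
  also have "\<dots> = (\<Sum>k\<in>I. \<Sum>i\<in>I. \<Sum>j\<in>I. D k * (cnj (x i) * U i k) * (cnj (U j k) * x j))"
    by (rule sum.swap)
  also have "\<dots> = (\<Sum>k\<in>I. D k * (cnj (y k) * y k))"
    by (intro sum.cong refl) (simp add: y sum_distrib_left sum_distrib_right mult_ac)
  finally show ?thesis
    by (simp add: y_def cnj_mult_self)
qed

lemma pos_def_unitary_diag:
  assumes U: "unitary_on I U" and D: "\<And>k. k \<in> I \<Longrightarrow> D k \<in> \<real> \<and> 0 < Re (D k)"
  shows "pos_def_on I (U \<star> (dmat I D \<star> U\<^sup>H))"
proof -
  have "dmat I (\<lambda>k. cnj (D k)) = dmat I D"
    using D by (intro dmat_cong) (simp add: Reals_cnj_iff)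
  then have herm: "(U \<star> (dmat I D \<star> U\<^sup>H))\<^sup>H = U \<star> (dmat I D \<star> U\<^sup>H)"
    by (simp add: ctrans_mmult ctrans_dmat mmult_assoc)
  have pos: "qform I (U \<star> (dmat I D \<star> U\<^sup>H)) x \<in> \<real> \<and> 0 < Re (qform I (U \<star> (dmat I D \<star> U\<^sup>H)) x)"
    if x: "vec_on I x" "x \<noteq> (\<lambda>_. 0)" for x
  proof -
    define y where "y = mvmult I (U\<^sup>H) x"
    have "mvmult I U y = x"
      using U x(1) by (simp add: y_def unitary_on_def flip: mvmult_mmult)
    then have "y \<noteq> (\<lambda>_. 0)"
      using x(2) by auto
    then obtain k where "y k \<noteq> 0"
      by (auto simp: fun_eq_iff)
    then have k: "k \<in> I" "y k \<noteq> 0"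
      using vec_on_mvmult[of I "U\<^sup>H" x] by (auto simp: y_def vec_on_def)
    have real: "D k * of_real ((cmod (y k))\<^sup>2) = of_real (Re (D k) * (cmod (y k))\<^sup>2)"
      if "k \<in> I" for k
      using D[OF that] by (simp add: complex_is_Real_iff)
    have "qform I (U \<star> (dmat I D \<star> U\<^sup>H)) x = of_real (\<Sum>k\<in>I. Re (D k) * (cmod (y k))\<^sup>2)"
      unfolding qform_unitary_diag y_def[symmetric] of_real_sum by (rule sum.cong[OF refl real])
    moreover have "0 < (\<Sum>k\<in>I. Re (D k) * (cmod (y k))\<^sup>2)"
      using D k finite_I by (intro sum_pos2[of _ k]) (auto simp: less_imp_le)
    ultimately show ?thesis
      by simp
  qed
  show ?thesis
    using U herm pos by (simp add: pos_def_on_def unitary_on_def)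
qed

lemma pos_def_sqrt_exists:
  assumes "pos_def_on I N"
  obtains S where "pos_def_on I S" "S \<star> S = N"
proof -
  obtain U D where U: "unitary_on I U" and ND: "N = U \<star> (dmat I D \<star> U\<^sup>H)"
    and D: "\<And>k. k \<in> I \<Longrightarrow> D k \<in> \<real> \<and> 0 < Re (D k)"
    using pos_def_diagonalization[OF assms] by blast
  define E where "E = (\<lambda>k. complex_of_real (sqrt (Re (D k))))"
  have "pos_def_on I (U \<star> (dmat I E \<star> U\<^sup>H))"
    using D by (intro pos_def_unitary_diag[OF U]) (simp add: E_def)
  moreover have "E k * E k = D k" if "k \<in> I" for k
  proof -
    have "E k * E k = of_real (Re (D k))"
      using D[OF that] by (simp add: E_def flip: of_real_mult)
    then show ?thesis
      using D[OF that] by (simp add: complex_is_Real_iff)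
  qed
  then have "dmat I (\<lambda>k. E k * E k) = dmat I D"
    by (rule dmat_cong)
  then have "U \<star> (dmat I E \<star> U\<^sup>H) \<star> (U \<star> (dmat I E \<star> U\<^sup>H)) = N"
    by (simp add: ND unitary_diag_mult[OF U])
  ultimately show ?thesis
    using that by blast
qed

lemma pos_def_invertible:
  assumes "pos_def_on I N"
  obtains M where "mat_on I M" "N \<star> M = mone I" "M \<star> N = mone I"
proof -
  obtain U D where U: "unitary_on I U" and ND: "N = U \<star> (dmat I D \<star> U\<^sup>H)"
    and D: "\<And>k. k \<in> I \<Longrightarrow> D k \<in> \<real> \<and> 0 < Re (D k)"
    using pos_def_diagonalization[OF assms] by blast
  define M where "M = U \<star> (dmat I (\<lambda>k. 1 / D k) \<star> U\<^sup>H)"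
  have one: "U \<star> (dmat I (\<lambda>_. 1) \<star> U\<^sup>H) = mone I"
    using U by (simp add: dmat_one unitary_on_def)
  have "D k \<noteq> 0" if "k \<in> I" for k
    using D[OF that] by auto
  then have "dmat I (\<lambda>k. D k * (1 / D k)) = dmat I (\<lambda>_. 1)"
    "dmat I (\<lambda>k. 1 / D k * D k) = dmat I (\<lambda>_. 1)"
    by (auto intro!: dmat_cong)
  then have "N \<star> M = mone I" "M \<star> N = mone I"
    by (simp_all add: ND M_def unitary_diag_mult[OF U] one)
  then show ?thesis
    using that[of M] by (simp add: M_def)
qed

lemma pos_def_sqrt_unique:
  assumes S: "pos_def_on I S" and T: "pos_def_on I T" and ST: "S \<star> S = T \<star> T"
  shows "S = T"
proof -
  have "mat_on I (S - T)" "(S - T)\<^sup>H = S - T"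
    using S T by (simp_all add: pos_def_on_def ctrans_diff)
  then obtain U D where U: "unitary_on I U" and HD: "S - T = U \<star> (dmat I D \<star> U\<^sup>H)"
    by (rule hermitian_diagonalization)
  define E where "E = U\<^sup>H \<star> S \<star> U"
  define F where "F = U\<^sup>H \<star> T \<star> U"
  have EF: "E - F = dmat I D"
    using unitary_conj_dmat[OF U, of D]
    by (simp add: E_def F_def HD flip: mmult_diff_left mmult_diff_right)
  have "S \<star> (S \<star> X) = T \<star> (T \<star> X)" for X
    by (simp add: ST flip: mmult_assoc)
  then have "E \<star> E = F \<star> F"
    using U by (simp add: E_def F_def unitary_on_def mmult_assoc mmult_cancel)
  \<comment> \<open>The diagonal of \<open>E (E - F) + (E - F) F = E E - F F = 0\<close> reads \<open>D k (E k k + F k k) = 0\<close>.\<close>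
  then have diag: "(E \<star> (E - F)) k k + ((E - F) \<star> F) k k = 0" for k
    unfolding mmult_diff_left mmult_diff_right by (simp add: fun_diff_def)
  have "D k * (E k k + F k k) = 0" if "k \<in> I" for k
    using diag[of k] that by (simp add: EF dmat_mmult_entry algebra_simps)
  moreover have "0 < Re (E k k + F k k)" if "k \<in> I" for k
    using pos_def_conj_diag(2)[OF S U that] pos_def_conj_diag(2)[OF T U that]
    by (simp add: E_def F_def)
  ultimately have "D k = 0" if "k \<in> I" for k
    using that by (metis less_irrefl mult_eq_0_iff zero_complex.sel(1))
  then have "dmat I D = (\<lambda>_ _. 0)"
    by (auto simp: dmat_def fun_eq_iff)
  then have "S i j - T i j = 0" for i j
    using fun_cong[OF fun_cong[OF HD, of i], of j] by (simp add: mmult_def)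
  then show ?thesis
    by (simp add: fun_eq_iff)
qed

end

section \<open>Moore-Penrose inverses\<close>

definition is_mp :: "'a set \<Rightarrow> 'a cmat \<Rightarrow> 'a cmat \<Rightarrow> bool" where
  "is_mp I A X \<longleftrightarrow> mat_on I X \<and> mmult I (mmult I A X) A = A \<and> mmult I (mmult I X A) X = X \<and>
     (mmult I A X)\<^sup>H = mmult I A X \<and> (mmult I X A)\<^sup>H = mmult I X A"

context finite_index
begin

lemma is_mp_ctrans:
  assumes "is_mp I A X"
  shows "is_mp I (A\<^sup>H) (X\<^sup>H)"
proof -
  have AXA: "A \<star> X \<star> A = A" and XAX: "X \<star> A \<star> X = X"
    and AX: "(A \<star> X)\<^sup>H = A \<star> X" and XA: "(X \<star> A)\<^sup>H = X \<star> A"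
    using assms by (simp_all add: is_mp_def)
  have "A\<^sup>H \<star> X\<^sup>H \<star> A\<^sup>H = (A \<star> X \<star> A)\<^sup>H" "X\<^sup>H \<star> A\<^sup>H \<star> X\<^sup>H = (X \<star> A \<star> X)\<^sup>H"
    by (simp_all only: ctrans_mmult mmult_assoc)
  moreover have "A\<^sup>H \<star> X\<^sup>H = X \<star> A" "X\<^sup>H \<star> A\<^sup>H = A \<star> X"
    by (simp_all only: XA AX flip: ctrans_mmult)
  ultimately show ?thesis
    using assms by (simp add: is_mp_def AXA XAX AX XA)
qed

lemma is_mp_unique:
  assumes X: "is_mp I A X" and Y: "is_mp I A Y"
  shows "X = Y"
proof -
  have AXA: "A \<star> X \<star> A = A" and XAX: "X \<star> A \<star> X = X"
    and AX: "(A \<star> X)\<^sup>H = A \<star> X" and XA: "(X \<star> A)\<^sup>H = X \<star> A"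
    using X by (simp_all add: is_mp_def)
  have AYA: "A \<star> Y \<star> A = A" and YAY: "Y \<star> A \<star> Y = Y"
    and AY: "(A \<star> Y)\<^sup>H = A \<star> Y" and YA: "(Y \<star> A)\<^sup>H = Y \<star> A"
    using Y by (simp_all add: is_mp_def)
  have "X = X \<star> (A \<star> X)\<^sup>H"
    by (simp only: AX XAX flip: mmult_assoc)
  also have "\<dots> = X \<star> (A \<star> Y \<star> A \<star> X)\<^sup>H"
    by (simp only: AYA)
  also have "\<dots> = X \<star> (A \<star> X)\<^sup>H \<star> (A \<star> Y)\<^sup>H"
    by (simp only: ctrans_mmult mmult_assoc)
  also have "\<dots> = X \<star> A \<star> X \<star> A \<star> Y"
    by (simp only: AX AY mmult_assoc)
  also have "\<dots> = X \<star> A \<star> Y"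
    by (simp only: XAX)
  also have "\<dots> = X \<star> A \<star> (Y \<star> A) \<star> Y"
    by (simp only: YAY mmult_assoc[of "X \<star> A" "Y \<star> A" Y])
  also have "\<dots> = (X \<star> A)\<^sup>H \<star> (Y \<star> A)\<^sup>H \<star> Y"
    by (simp only: XA YA)
  also have "\<dots> = (Y \<star> (A \<star> X \<star> A))\<^sup>H \<star> Y"
    by (simp only: ctrans_mmult mmult_assoc)
  also have "\<dots> = Y"
    by (simp only: AXA YA YAY)
  finally show ?thesis .
qed

lemma is_mp_gram:
  assumes "is_mp I T Y"
  shows "is_mp I (T\<^sup>H \<star> T) (Y \<star> Y\<^sup>H)" "T\<^sup>H \<star> T \<star> (Y \<star> Y\<^sup>H) = Y \<star> T"
proof -
  have TYT: "T \<star> Y \<star> T = T" and YTY: "Y \<star> T \<star> Y = Y" and Y: "mat_on I Y"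
    and TY: "(T \<star> Y)\<^sup>H = T \<star> Y" and YT: "(Y \<star> T)\<^sup>H = Y \<star> T"
    using assms by (simp_all add: is_mp_def)
  have GZ: "T\<^sup>H \<star> T \<star> (Y \<star> Y\<^sup>H) = Y \<star> T"
  proof -
    have "T\<^sup>H \<star> T \<star> (Y \<star> Y\<^sup>H) = T\<^sup>H \<star> (T \<star> Y)\<^sup>H \<star> Y\<^sup>H"
      by (simp only: TY mmult_assoc)
    also have "\<dots> = (Y \<star> T \<star> Y \<star> T)\<^sup>H"
      by (simp only: ctrans_mmult mmult_assoc)
    finally show ?thesis
      by (simp only: YTY YT)
  qed
  have ZG: "Y \<star> Y\<^sup>H \<star> (T\<^sup>H \<star> T) = Y \<star> T"
  proof -
    have "Y \<star> Y\<^sup>H \<star> (T\<^sup>H \<star> T) = Y \<star> (T \<star> Y)\<^sup>H \<star> T"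
      by (simp only: ctrans_mmult mmult_assoc)
    also have "\<dots> = Y \<star> (T \<star> Y \<star> T)"
      by (simp only: TY mmult_assoc)
    finally show ?thesis
      by (simp only: TYT)
  qed
  have "T\<^sup>H \<star> T \<star> (Y \<star> Y\<^sup>H) \<star> (T\<^sup>H \<star> T) = Y \<star> T \<star> (T\<^sup>H \<star> T)"
    by (simp only: GZ)
  also have "\<dots> = (Y \<star> T)\<^sup>H \<star> T\<^sup>H \<star> T"
    by (simp only: YT mmult_assoc)
  also have "\<dots> = (T \<star> Y \<star> T)\<^sup>H \<star> T"
    by (simp only: ctrans_mmult mmult_assoc)
  finally have GZG: "T\<^sup>H \<star> T \<star> (Y \<star> Y\<^sup>H) \<star> (T\<^sup>H \<star> T) = T\<^sup>H \<star> T"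
    by (simp only: TYT)
  have "Y \<star> Y\<^sup>H \<star> (T\<^sup>H \<star> T) \<star> (Y \<star> Y\<^sup>H) = Y \<star> T \<star> (Y \<star> Y\<^sup>H)"
    by (simp only: ZG)
  also have "\<dots> = Y \<star> T \<star> Y \<star> Y\<^sup>H"
    by (simp only: mmult_assoc)
  finally have ZGZ: "Y \<star> Y\<^sup>H \<star> (T\<^sup>H \<star> T) \<star> (Y \<star> Y\<^sup>H) = Y \<star> Y\<^sup>H"
    by (simp only: YTY)
  show "is_mp I (T\<^sup>H \<star> T) (Y \<star> Y\<^sup>H)"
    using GZ ZG GZG ZGZ YT by (simp add: is_mp_def)
  show "T\<^sup>H \<star> T \<star> (Y \<star> Y\<^sup>H) = Y \<star> T"
    by (rule GZ)
qed

lemma normal_is_mp_commute: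
  assumes Y: "is_mp I T Y" and normal: "T\<^sup>H \<star> T = T \<star> T\<^sup>H"
  shows "T \<star> Y = Y \<star> T"
proof -
  note gram = is_mp_gram[OF Y]
  note gram' = is_mp_gram[OF is_mp_ctrans[OF Y], unfolded ctrans_ctrans]
  \<comment> \<open>\<open>Y Y\<^sup>H\<close> and \<open>Y\<^sup>H Y\<close> are the Moore-Penrose inverses of \<open>T\<^sup>H T\<close> and \<open>T T\<^sup>H\<close>, which coincide.\<close>
  have "Y \<star> Y\<^sup>H = Y\<^sup>H \<star> Y"
    using is_mp_unique gram(1) gram'(1) normal by metis
  then have "Y \<star> T = T \<star> T\<^sup>H \<star> (Y\<^sup>H \<star> Y)"
    using gram(2) normal by simp
  also have "\<dots> = (T \<star> Y)\<^sup>H"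
    by (simp only: gram'(2) ctrans_mmult)
  also have "\<dots> = T \<star> Y"
    using Y by (simp add: is_mp_def)
  finally show ?thesis
    by simp
qed

lemma ctrans_mmult_self_zero:
  assumes "mat_on I A" "A\<^sup>H \<star> A = (\<lambda>_ _. 0)"
  shows "A = (\<lambda>_ _. 0)"
proof (intro ext)
  fix j k
  show "A j k = 0"
  proof (cases "j \<in> I \<and> k \<in> I")
    case True
    have "of_real (\<Sum>i\<in>I. (cmod (A i k))\<^sup>2) = (A\<^sup>H \<star> A) k k"
      using True by (simp add: mmult_def ctrans_def cnj_mult_self)
    then have "complex_of_real (\<Sum>i\<in>I. (cmod (A i k))\<^sup>2) = 0"
      unfolding assms(2) .
    then have "(\<Sum>i\<in>I. (cmod (A i k))\<^sup>2) = 0"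
      by (simp only: of_real_eq_0_iff)
    then show ?thesis
      using True finite_I by (simp add: sum_nonneg_eq_0_iff)
  qed (use assms(1) in \<open>auto simp: mat_on_def\<close>)
qed

lemma ctrans_unitary_diag:
  "(U \<star> (dmat I D \<star> U\<^sup>H))\<^sup>H = U \<star> (dmat I (\<lambda>k. cnj (D k)) \<star> U\<^sup>H)"
  by (simp add: ctrans_mmult ctrans_dmat mmult_assoc)

lemma hermitian_is_mp_exists:
  assumes "mat_on I B" "B\<^sup>H = B"
  obtains C where "is_mp I B C" "B \<star> C = C \<star> B"
proof -
  obtain U D where U: "unitary_on I U" and BD: "B = U \<star> (dmat I D \<star> U\<^sup>H)"
    and real: "\<And>k. k \<in> I \<Longrightarrow> D k \<in> \<real>"
    using hermitian_diagonalization[OF assms] by blast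
  define E where "E = (\<lambda>k. if D k = 0 then 0 else 1 / D k)"
  define C where "C = U \<star> (dmat I E \<star> U\<^sup>H)"
  let ?P = "U \<star> (dmat I (\<lambda>k. D k * E k) \<star> U\<^sup>H)"
  have BC: "B \<star> C = ?P" and CB: "C \<star> B = ?P"
    by (simp_all only: BD C_def unitary_diag_mult[OF U] mult.commute)
  have DED: "(\<lambda>k. D k * E k * D k) = D" and EDE: "(\<lambda>k. E k * D k * E k) = E"
    by (auto simp: E_def)
  have real_DE: "dmat I (\<lambda>k. cnj (D k * E k)) = dmat I (\<lambda>k. D k * E k)"
    by (rule dmat_cong) (auto simp: E_def)
  have "is_mp I B C"
    unfolding is_mp_def
  proof (intro conjI)
    show "mat_on I C"
      by (simp add: C_def)
    show "B \<star> C \<star> B = B"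
      by (simp only: BD C_def unitary_diag_mult[OF U] DED)
    show "C \<star> B \<star> C = C"
      by (simp only: BD C_def unitary_diag_mult[OF U] EDE)
    show "(B \<star> C)\<^sup>H = B \<star> C" "(C \<star> B)\<^sup>H = C \<star> B"
      by (simp_all only: BC CB ctrans_unitary_diag real_DE)
  qed
  with BC CB that show ?thesis
    by simp
qed

lemma is_mp_exists:
  assumes A: "mat_on I A"
  obtains X where "is_mp I A X"
proof -
  define B where "B = A\<^sup>H \<star> A"
  have B: "mat_on I B" "B\<^sup>H = B"
    by (simp_all add: B_def ctrans_mmult)
  obtain C where C: "is_mp I B C" and comm: "B \<star> C = C \<star> B"
    using hermitian_is_mp_exists[OF B] by blast
  have CH: "C\<^sup>H = C"
    using is_mp_unique[OF is_mp_ctrans[OF C, unfolded B(2)] C] .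
  have BCB: "B \<star> C \<star> B = B" and CBC: "C \<star> B \<star> C = C" and CB: "(C \<star> B)\<^sup>H = C \<star> B"
    using C by (simp_all add: is_mp_def)
  define P where "P = C \<star> B"
  have BP: "B \<star> P = B" and PB: "P \<star> B = B"
    using BCB by (simp_all only: P_def mmult_assoc flip: comm)
  \<comment> \<open>\<open>A P = A\<close>, because \<open>M = A - A P\<close> satisfies \<open>M\<^sup>H M = B - P B - B P + P B P = 0\<close>.\<close>
  have AP: "A \<star> P = A"
  proof -
    have APH: "(A \<star> P)\<^sup>H = P \<star> A\<^sup>H"
      using CB by (simp add: ctrans_mmult P_def)
    have "(A - A \<star> P)\<^sup>H \<star> (A - A \<star> P) = (B - P \<star> B) - (B \<star> P - P \<star> B \<star> P)"
      by (simp add: ctrans_diff mmult_diff_left mmult_diff_right APH B_def mmult_assoc)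
    also have "\<dots> = (\<lambda>_ _. 0)"
      by (simp add: BP PB fun_eq_iff)
    finally have "A - A \<star> P = (\<lambda>_ _. 0)"
      by (rule ctrans_mmult_self_zero[rotated]) (simp add: A)
    then show ?thesis
      by (metis cmat_eq_if_diff_zero)
  qed
  define X where "X = C \<star> A\<^sup>H"
  have XA: "X \<star> A = P"
    by (simp add: X_def P_def B_def mmult_assoc)
  have "is_mp I A X"
    unfolding is_mp_def
  proof (intro conjI)
    show "mat_on I X"
      by (simp add: X_def)
    show "A \<star> X \<star> A = A"
      by (simp only: mmult_assoc XA AP)
    have "X \<star> A \<star> X = C \<star> B \<star> C \<star> A\<^sup>H"
      by (simp only: XA P_def X_def B_def mmult_assoc)
    then show "X \<star> A \<star> X = X"
      by (simp only: CBC X_def)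
    show "(A \<star> X)\<^sup>H = A \<star> X"
      by (simp add: X_def ctrans_mmult CH mmult_assoc)
    show "(X \<star> A)\<^sup>H = X \<star> A"
      by (simp add: XA P_def CB)
  qed
  then show ?thesis
    by (rule that)
qed

end

definition spec_on :: "'a set \<Rightarrow> 'a cmat \<Rightarrow> complex set" where
  "spec_on I A = {c. \<exists>x. vec_on I x \<and> x \<noteq> (\<lambda>_. 0) \<and> mvmult I A x = (\<lambda>i. c * x i)}"

context finite_index
begin

lemma spec_on_subset_conj:
  assumes "Q \<star> P = mone I"
  shows "spec_on I B \<subseteq> spec_on I (P \<star> B \<star> Q)"
proof
  fix c
  assume "c \<in> spec_on I B"
  then obtain x where x: "vec_on I x" "x \<noteq> (\<lambda>_. 0)" "mvmult I B x = (\<lambda>i. c * x i)"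
    by (auto simp: spec_on_def)
  define y where "y = mvmult I P x"
  have Qy: "mvmult I Q y = x"
    using assms x(1) by (simp add: y_def flip: mvmult_mmult)
  then have "y \<noteq> (\<lambda>_. 0)"
    using x(2) by auto
  moreover have "mvmult I (P \<star> B \<star> Q) y = (\<lambda>i. c * y i)"
    by (simp add: mvmult_mmult Qy x(3) mvmult_scale y_def[symmetric])
  moreover have "vec_on I y"
    by (simp add: y_def)
  ultimately show "c \<in> spec_on I (P \<star> B \<star> Q)"
    unfolding spec_on_def by blast
qed

lemma spec_on_similar:
  assumes "P \<star> Q = mone I" "Q \<star> P = mone I" "mat_on I B"
  shows "spec_on I (P \<star> B \<star> Q) = spec_on I B"
proof
  show "spec_on I B \<subseteq> spec_on I (P \<star> B \<star> Q)"
    using assms(2) by (rule spec_on_subset_conj)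
  have "Q \<star> (P \<star> B \<star> Q) \<star> P = B"
    using assms by (simp add: mmult_assoc mmult_cancel)
  then show "spec_on I (P \<star> B \<star> Q) \<subseteq> spec_on I B"
    using spec_on_subset_conj[OF assms(1), of "P \<star> B \<star> Q"] by simp
qed

lemma commuting_mp_eigenvector:
  assumes TYT: "T \<star> Y \<star> T = T" and comm: "T \<star> Y = Y \<star> T" and "l \<noteq> 0"
    and eig: "mvmult I T x = (\<lambda>i. l * x i)"
  shows "mvmult I Y x = (\<lambda>i. 1 / l * x i)"
proof -
  have "(\<lambda>i. l * x i) = mvmult I (Y \<star> T \<star> T) x"
    using TYT comm eig by simp
  also have "\<dots> = (\<lambda>i. l * l * mvmult I Y x i)"
    by (simp add: mvmult_mmult eig mvmult_scale mult.assoc)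
  finally show ?thesis
    using \<open>l \<noteq> 0\<close> by (simp add: fun_eq_iff field_simps)
qed

lemma spec_on_commuting_mp:
  assumes Y: "is_mp I T Y" and comm: "T \<star> Y = Y \<star> T" and "l \<noteq> 0"
  shows "l \<in> spec_on I T \<longleftrightarrow> 1 / l \<in> spec_on I Y"
proof
  assume "l \<in> spec_on I T"
  then show "1 / l \<in> spec_on I Y"
    using commuting_mp_eigenvector[OF _ comm \<open>l \<noteq> 0\<close>] Y by (auto simp: spec_on_def is_mp_def)
next
  assume "1 / l \<in> spec_on I Y"
  then show "l \<in> spec_on I T"
    using commuting_mp_eigenvector[OF _ comm[symmetric], of "1 / l"] Y \<open>l \<noteq> 0\<close>
    by (auto simp: spec_on_def is_mp_def)
qed

end

section \<open>Weighted Moore-Penrose inverses\<close>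

definition is_wmp :: "'a set \<Rightarrow> 'a cmat \<Rightarrow> 'a cmat \<Rightarrow> 'a cmat \<Rightarrow> 'a cmat \<Rightarrow> bool" where
  "is_wmp I M N A X \<longleftrightarrow> mat_on I X \<and> mmult I (mmult I A X) A = A \<and> mmult I (mmult I X A) X = X \<and>
     (mmult I M (mmult I A X))\<^sup>H = mmult I M (mmult I A X) \<and>
     (mmult I N (mmult I X A))\<^sup>H = mmult I N (mmult I X A)"

lemma (in finite_index) is_wmp_mone: "is_wmp I (mone I) (mone I) A X \<longleftrightarrow> is_mp I A X"
  by (simp add: is_wmp_def is_mp_def)

text \<open>In the application \<open>S\<close> is \<open>N\<^sup>1\<^sup>/\<^sup>2\<close>, so that the weight \<open>N\<close> is \<open>S \<star> S\<close> and
  \<open>Sinv \<star> Sinv \<star> (A\<^sup>H \<star> (S \<star> S))\<close> is the weighted conjugate transpose of \<open>A\<close>.\<close>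

locale hermitian_conj = finite_index +
  fixes S Sinv :: "'a cmat"
  assumes mat_on_S: "mat_on I S" and mat_on_Sinv: "mat_on I Sinv"
    and S_Sinv: "S \<star> Sinv = mone I" and Sinv_S: "Sinv \<star> S = mone I" and hermitian_S: "S\<^sup>H = S"
begin

lemma hermitian_Sinv: "Sinv\<^sup>H = Sinv"
proof (rule inverse_unique)
  have "Sinv\<^sup>H \<star> S = (S \<star> Sinv)\<^sup>H"
    by (simp add: ctrans_mmult hermitian_S)
  then show "Sinv\<^sup>H \<star> S = mone I"
    by (simp add: S_Sinv)
qed (simp_all add: mat_on_Sinv S_Sinv)

lemmas conj_simps = mmult_assoc S_Sinv Sinv_S mmult_cancel[OF S_Sinv] mmult_cancel[OF Sinv_S]
  mat_on_S mat_on_Sinv hermitian_S hermitian_Sinv ctrans_mmult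

lemma conj_inj:
  assumes "mat_on I Z" "mat_on I W"
  shows "S \<star> Z \<star> Sinv = S \<star> W \<star> Sinv \<longleftrightarrow> Z = W"
proof
  assume "S \<star> Z \<star> Sinv = S \<star> W \<star> Sinv"
  then have "Sinv \<star> (S \<star> Z \<star> Sinv) \<star> S = Sinv \<star> (S \<star> W \<star> Sinv) \<star> S"
    by simp
  then show "Z = W"
    using assms by (simp add: conj_simps)
qed simp

lemma conj_mult: "mat_on I W \<Longrightarrow> S \<star> Z \<star> Sinv \<star> (S \<star> W \<star> Sinv) = S \<star> (Z \<star> W) \<star> Sinv"
  by (simp add: conj_simps)

lemma conj_hermitian_iff:
  assumes Z: "mat_on I Z"
  shows "(S \<star> Z \<star> Sinv)\<^sup>H = S \<star> Z \<star> Sinv \<longleftrightarrow> (S \<star> S \<star> Z)\<^sup>H = S \<star> S \<star> Z"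
proof -
  have "(S \<star> S \<star> Z)\<^sup>H = S \<star> (S \<star> Z \<star> Sinv)\<^sup>H \<star> S" "S \<star> S \<star> Z = S \<star> (S \<star> Z \<star> Sinv) \<star> S"
    "(S \<star> Z \<star> Sinv)\<^sup>H = Sinv \<star> (S \<star> S \<star> Z)\<^sup>H \<star> Sinv"
    "S \<star> Z \<star> Sinv = Sinv \<star> (S \<star> S \<star> Z) \<star> Sinv"
    using Z by (simp_all add: conj_simps)
  then show ?thesis
    by metis
qed

lemma is_wmp_conj_iff:
  assumes A: "mat_on I A" and X: "mat_on I X"
  shows "is_wmp I (S \<star> S) (S \<star> S) A X \<longleftrightarrow> is_mp I (S \<star> A \<star> Sinv) (S \<star> X \<star> Sinv)"
  using assms by (simp add: is_wmp_def is_mp_def conj_mult conj_inj conj_hermitian_iff)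

lemma is_wmp_iff_conj_mp:
  assumes A: "mat_on I A" and Y: "is_mp I (S \<star> A \<star> Sinv) Y"
  shows "is_wmp I (S \<star> S) (S \<star> S) A X \<longleftrightarrow> X = Sinv \<star> Y \<star> S"
proof
  assume X: "is_wmp I (S \<star> S) (S \<star> S) A X"
  then have "mat_on I X"
    by (simp add: is_wmp_def)
  with X A have "S \<star> X \<star> Sinv = Y"
    using is_mp_unique Y by (simp add: is_wmp_conj_iff)
  then show "X = Sinv \<star> Y \<star> S"
    using \<open>mat_on I X\<close> by (auto simp: conj_simps)
next
  assume X: "X = Sinv \<star> Y \<star> S"
  have "mat_on I Y"
    using Y by (simp add: is_mp_def)
  then have "S \<star> X \<star> Sinv = Y"
    by (simp add: X conj_simps)
  then show "is_wmp I (S \<star> S) (S \<star> S) A X"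
    using A Y by (simp add: is_wmp_conj_iff X)
qed

lemma weighted_normal_conj:
  assumes A: "mat_on I A"
    and normal: "Sinv \<star> Sinv \<star> (A\<^sup>H \<star> (S \<star> S)) \<star> A = A \<star> (Sinv \<star> Sinv \<star> (A\<^sup>H \<star> (S \<star> S)))"
  shows "(S \<star> A \<star> Sinv)\<^sup>H \<star> (S \<star> A \<star> Sinv) = (S \<star> A \<star> Sinv) \<star> (S \<star> A \<star> Sinv)\<^sup>H"
proof -
  have "(S \<star> A \<star> Sinv)\<^sup>H \<star> (S \<star> A \<star> Sinv) = S \<star> (Sinv \<star> Sinv \<star> (A\<^sup>H \<star> (S \<star> S)) \<star> A) \<star> Sinv"
    "(S \<star> A \<star> Sinv) \<star> (S \<star> A \<star> Sinv)\<^sup>H = S \<star> (A \<star> (Sinv \<star> Sinv \<star> (A\<^sup>H \<star> (S \<star> S)))) \<star> Sinv"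
    using A by (simp_all add: conj_simps)
  with normal show ?thesis
    by simp
qed

lemma conj_spectra:
  assumes A: "mat_on I A" and Y: "is_mp I (S \<star> A \<star> Sinv) Y"
  shows "spec_on I (S \<star> A \<star> Sinv) = spec_on I A"
    and "spec_on I (Sinv \<star> Y \<star> S) = spec_on I Y"
    and "Sinv \<star> Sinv \<star> (A\<^sup>H \<star> (S \<star> S)) \<star> A = A \<star> (Sinv \<star> Sinv \<star> (A\<^sup>H \<star> (S \<star> S))) \<Longrightarrow>
      l \<noteq> 0 \<Longrightarrow> l \<in> spec_on I A \<longleftrightarrow> 1 / l \<in> spec_on I (Sinv \<star> Y \<star> S)"
proof -
  show spec_A: "spec_on I (S \<star> A \<star> Sinv) = spec_on I A"
    using A by (simp add: spec_on_similar S_Sinv Sinv_S)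
  show spec_Y: "spec_on I (Sinv \<star> Y \<star> S) = spec_on I Y"
    using Y by (simp add: spec_on_similar S_Sinv Sinv_S is_mp_def)
  assume "Sinv \<star> Sinv \<star> (A\<^sup>H \<star> (S \<star> S)) \<star> A = A \<star> (Sinv \<star> Sinv \<star> (A\<^sup>H \<star> (S \<star> S)))" "l \<noteq> 0"
  then have "S \<star> A \<star> Sinv \<star> Y = Y \<star> (S \<star> A \<star> Sinv)"
    using normal_is_mp_commute[OF Y] weighted_normal_conj[OF A] by simp
  then show "l \<in> spec_on I A \<longleftrightarrow> 1 / l \<in> spec_on I (Sinv \<star> Y \<star> S)"
    using spec_on_commuting_mp[OF Y _ \<open>l \<noteq> 0\<close>] spec_A spec_Y by simp
qed

end

section \<open>Tensors as matrices\<close>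

lemma finite_idx: "finite (idx d)"
proof (rule finite_subset)
  show "idx d \<subseteq> {xs. set xs \<subseteq> {..<sum_list d} \<and> length xs = length d}"
  proof
    fix xs
    assume "xs \<in> idx d"
    then have "length xs = length d" "\<forall>k<length d. xs ! k < d ! k"
      by (auto simp: idx_def)
    moreover have "d ! k \<le> sum_list d" if "k < length d" for k
      using that by (simp add: elem_le_sum_list)
    ultimately show "xs \<in> {xs. set xs \<subseteq> {..<sum_list d} \<and> length xs = length d}"
      by (auto simp: in_set_conv_nth) (metis order_less_le_trans)
  qed
  show "finite {xs. set xs \<subseteq> {..<sum_list d} \<and> length xs = length d}"
    by (rule finite_lists_length_eq) simp
qed

lemma tensor_ops_as_matrix:
  "eprod d = mmult (idx d)" "eapp d = mvmult (idx d)" "tident d = mone (idx d)"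
  "tens d = mat_on (idx d)" "vtens d = vec_on (idx d)" "tH = ctrans"
  "hpd d = pos_def_on (idx d)" "tspec d = spec_on (idx d)"
  "wmp d M N A = (THE X. is_wmp (idx d) M N A X)"
proof -
  show ops: "eprod d = mmult (idx d)" "eapp d = mvmult (idx d)" "tident d = mone (idx d)"
    "tens d = mat_on (idx d)" "vtens d = vec_on (idx d)" "tH = ctrans"
    by (intro ext; simp add: eprod_def mmult_def eapp_def mvmult_def tident_def mone_def
        tens_def mat_on_def vtens_def vec_on_def tH_def ctrans_def)+
  show "hpd d = pos_def_on (idx d)"
    by (intro ext) (simp only: hpd_def pos_def_on_def qform_def ops Let_def)
  show "tspec d = spec_on (idx d)"
    by (intro ext) (simp only: tspec_def spec_on_def ops)
  show "wmp d M N A = (THE X. is_wmp (idx d) M N A X)"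
    by (simp only: wmp_def is_wmp_def ops)
qed

interpretation idx: finite_index "idx d"
  by (rule finite_index.intro[OF finite_idx])

lemma tinv_eqI:
  assumes "mat_on (idx d) B" "mmult (idx d) A B = mone (idx d)" "mmult (idx d) B A = mone (idx d)"
  shows "tinv d A = B"
  unfolding tinv_def tensor_ops_as_matrix
proof (rule the_equality)
  fix C
  assume "mat_on (idx d) C \<and> mmult (idx d) A C = mone (idx d) \<and> mmult (idx d) C A = mone (idx d)"
  then show "C = B"
    using idx.inverse_unique[of d C B A] assms by simp
qed (use assms in simp)

lemma tsqrt_pos_def:
  assumes "pos_def_on (idx d) N"
  shows "pos_def_on (idx d) (tsqrt d N)" "mmult (idx d) (tsqrt d N) (tsqrt d N) = N"
proof -
  have "\<exists>!S. pos_def_on (idx d) S \<and> mmult (idx d) S S = N"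
    using idx.pos_def_sqrt_exists[OF assms] idx.pos_def_sqrt_unique by metis
  from theI'[OF this]
  show "pos_def_on (idx d) (tsqrt d N)" "mmult (idx d) (tsqrt d N) (tsqrt d N) = N"
    unfolding tsqrt_def tensor_ops_as_matrix by simp_all
qed

lemma mp_eqI:
  assumes "is_mp (idx d) A X"
  shows "mp d A = X"
  unfolding mp_def tensor_ops_as_matrix idx.is_wmp_mone
proof (rule the_equality)
  show "\<And>Y. is_mp (idx d) A Y \<Longrightarrow> Y = X"
    using assms idx.is_mp_unique by simp
qed (rule assms)

theorem theorem4p7:
  fixes d :: "nat list" and A N :: tensor
  assumes "tens d A"
    and "hpd d N"
  defines "At \<equiv> eprod d (eprod d (tsqrt d N) A) (tinv d (tsqrt d N))"
  shows "(\<forall>l. l \<in> tspec d A \<longleftrightarrow> l \<in> tspec d At)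
       \<and> (\<forall>l. l \<in> tspec d (wmp d N N A) \<longleftrightarrow> l \<in> tspec d (mp d At))
       \<and> (eprod d (wct d N A) A = eprod d A (wct d N A) \<longrightarrow>
           (\<forall>l. l \<noteq> 0 \<longrightarrow> (l \<in> tspec d A \<longleftrightarrow> 1 / l \<in> tspec d (wmp d N N A))))"
proof -
  define S where "S = tsqrt d N"
  have A: "mat_on (idx d) A" and N: "pos_def_on (idx d) N"
    using assms(1,2) by (simp_all add: tensor_ops_as_matrix)
  have S: "pos_def_on (idx d) S" "mmult (idx d) S S = N"
    using tsqrt_pos_def[OF N] by (simp_all add: S_def)
  obtain Sinv where Sinv: "mat_on (idx d) Sinv" "mmult (idx d) S Sinv = mone (idx d)"
    "mmult (idx d) Sinv S = mone (idx d)"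
    using idx.pos_def_invertible[OF S(1)] by blast
  interpret hermitian_conj "idx d" S Sinv
    using finite_idx S(1) Sinv by unfold_locales (simp_all add: pos_def_on_def)
  have "tinv d S = Sinv"
    using Sinv by (rule tinv_eqI)
  then have At: "At = mmult (idx d) (mmult (idx d) S A) Sinv"
    by (simp add: At_def tensor_ops_as_matrix S_def[symmetric])
  obtain Y where Y: "is_mp (idx d) At Y"
    using idx.is_mp_exists[of d At] by (simp add: At) blast
  have "wmp d N N A = mmult (idx d) (mmult (idx d) Sinv Y) S"
    using is_wmp_iff_conj_mp[OF A Y[unfolded At]] by (simp add: tensor_ops_as_matrix flip: S(2))
  moreover have "mp d At = Y"
    using Y by (rule mp_eqI)
  moreover have "tinv d N = mmult (idx d) Sinv Sinv"
    by (rule tinv_eqI) (simp_all add: conj_simps flip: S(2))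
  ultimately show ?thesis
    using conj_spectra[OF A Y[unfolded At]]
    by (simp add: tensor_ops_as_matrix At wct_def flip: S(2))
qed

end
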